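(* Under the setting below with $m\ge 3$, for every $\gamma=(\gamma_{12},\gamma_{13},\gamma_{23})\in\mathbb{C}^3$, \[s_{3m-2}\big(\mathcal{S}_3(D,\gamma)\big)\le \max\{\|M_1\|_2,\|M_2\|_2,\|M_3\|_2\}.\]
   Context: $A\in\mathbb{C}^{n\times n}$, $B\in\mathbb{C}^{n\times m}$, $C\in\mathbb{C}^{m\times n}$, $D\in\mathbb{C}^{m\times m}$; $\lambda_1,\lambda_2,\lambda_3$ are distinct complex numbers, none an eigenvalue of $A$. $s_j(\cdot)$ denotes the $j$-th largest singular value. Write $A_i^{-1}=(A-\lambda_iI_n)^{-1}$, $M_i=(D-\lambda_iI_m)-CA_i^{-1}B$, $N_{ij}=I_m+CA_i^{-1}A_j^{-1}B$, $P_{123}=CA_1^{-1}A_2^{-1}A_3^{-1}B$, and \[\mathcal{S}_3(D,\gamma)=\begin{bmatrix}M_1&\gamma_{12}N_{12}&\gamma_{13}N_{13}-\gamma_{12}\gamma_{23}P_{123}\\0&M_2&\gamma_{23}N_{23}\\0&0&M_3\end{bmatrix}.\] *)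

theory Defs
  imports "Jordan_Normal_Form.Schur_Decomposition" "Jordan_Normal_Form.Char_Poly"
begin

(* inverse of a square matrix (meaningful when it is invertible) *)
definition cinv :: "complex mat \<Rightarrow> complex mat" where
  "cinv X = (SOME Y. Y \<in> carrier_mat (dim_row X) (dim_row X) \<and>
                     X * Y = 1\<^sub>m (dim_row X) \<and> Y * X = 1\<^sub>m (dim_row X))"

definition eigs :: "complex mat \<Rightarrow> complex list" where
  "eigs X = (SOME as. char_poly X = (\<Prod>a\<leftarrow>as. [:- a, 1:]) \<and> length as = dim_row X)"

definition sing_vals :: "complex mat \<Rightarrow> real list" where
  "sing_vals X = rev (sort (map (\<lambda>a. sqrt (Re a)) (eigs (mat_adjoint X * X))))"

(* s_j(X): the j-th largest singular value, j \<ge> 1 *)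
definition sval :: "nat \<Rightarrow> complex mat \<Rightarrow> real" where
  "sval j X = sing_vals X ! (j - 1)"

definition vnorm2 :: "complex vec \<Rightarrow> real" where
  "vnorm2 v = sqrt (\<Sum>i<dim_vec v. (cmod (v $ i))\<^sup>2)"

definition mnorm2 :: "complex mat \<Rightarrow> real" where
  "mnorm2 X = Sup {vnorm2 (X *\<^sub>v v) | v. v \<in> carrier_vec (dim_col X) \<and> vnorm2 v = 1}"

definition resA :: "complex mat \<Rightarrow> complex \<Rightarrow> complex mat" where
  "resA A l = cinv (A - l \<cdot>\<^sub>m 1\<^sub>m (dim_row A))"

definition Mmat :: "complex mat \<Rightarrow> complex mat \<Rightarrow> complex mat \<Rightarrow> complex mat \<Rightarrow> complex \<Rightarrow> complex mat" where
  "Mmat A B C D l = (D - l \<cdot>\<^sub>m 1\<^sub>m (dim_row D)) - C * resA A l * B"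

definition Nmat :: "complex mat \<Rightarrow> complex mat \<Rightarrow> complex mat \<Rightarrow> complex \<Rightarrow> complex \<Rightarrow> complex mat" where
  "Nmat A B C li lj = 1\<^sub>m (dim_row C) + C * resA A li * resA A lj * B"

definition Pmat :: "complex mat \<Rightarrow> complex mat \<Rightarrow> complex mat \<Rightarrow> complex \<Rightarrow> complex \<Rightarrow> complex \<Rightarrow> complex mat" where
  "Pmat A B C l1 l2 l3 = C * resA A l1 * resA A l2 * resA A l3 * B"

definition block3 :: "nat \<Rightarrow> complex mat \<Rightarrow> complex mat \<Rightarrow> complex mat \<Rightarrow> complex mat \<Rightarrow> complex mat
    \<Rightarrow> complex mat \<Rightarrow> complex mat \<Rightarrow> complex mat \<Rightarrow> complex mat \<Rightarrow> complex mat" where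
  "block3 m X11 X12 X13 X21 X22 X23 X31 X32 X33 =
     mat (3 * m) (3 * m) (\<lambda>(i, j).
       let bi = i div m; bj = j div m; r = i mod m; c = j mod m;
           X = (if bi = 0 then (if bj = 0 then X11 else if bj = 1 then X12 else X13)
                else if bi = 1 then (if bj = 0 then X21 else if bj = 1 then X22 else X23)
                else (if bj = 0 then X31 else if bj = 1 then X32 else X33))
       in X $$ (r, c))"

definition S3 :: "nat \<Rightarrow> complex mat \<Rightarrow> complex mat \<Rightarrow> complex mat \<Rightarrow> complex mat
    \<Rightarrow> complex \<Rightarrow> complex \<Rightarrow> complex \<Rightarrow> complex \<Rightarrow> complex \<Rightarrow> complex \<Rightarrow> complex mat" where
  "S3 m A B C D l1 l2 l3 g12 g13 g23 =
     block3 m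
       (Mmat A B C D l1) (g12 \<cdot>\<^sub>m Nmat A B C l1 l2)
         (g13 \<cdot>\<^sub>m Nmat A B C l1 l3 - (g12 * g23) \<cdot>\<^sub>m Pmat A B C l1 l2 l3)
       (0\<^sub>m m m) (Mmat A B C D l2) (g23 \<cdot>\<^sub>m Nmat A B C l2 l3)
       (0\<^sub>m m m) (0\<^sub>m m m) (Mmat A B C D l3)"

end

(* The first m columns of S = S_3(D, gamma) form the block column [M_1; 0; 0], so
   |S x| <= |M_1| |x| for every x supported on the first m coordinates.  By the min-max
   principle for the Hermitian matrix S^H S (diagonalised by a unitary matrix that is built
   column by column from Householder reflections), at least m eigenvalues of S^H S are at most
   |M_1|^2, i.e. the m smallest singular values of S are at most |M_1|.  For m >= 3 the value
   s_(3m-2), the third smallest of the 3m singular values, is one of them. *)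

theory Submission
  imports Defs "Berlekamp_Zassenhaus.Mahler_Measure"
begin

lemma index_mult_mat_sum:
  "i < dim_row A \<Longrightarrow> j < dim_col B \<Longrightarrow> dim_col A = dim_row B \<Longrightarrow>
   (A * B) $$ (i, j) = (\<Sum>k<dim_row B. A $$ (i, k) * B $$ (k, j))"
  by (simp add: scalar_prod_def atLeast0LessThan)

lemma index_mult_mat_vec_sum:
  "i < dim_row A \<Longrightarrow> dim_col A = dim_vec v \<Longrightarrow>
   (A *\<^sub>v v) $ i = (\<Sum>k<dim_vec v. A $$ (i, k) * v $ k)"
  by (simp add: scalar_prod_def atLeast0LessThan)

lemma scalar_prod_sum: "dim_vec w = n \<Longrightarrow> v \<bullet> w = (\<Sum>k<n. v $ k * w $ k)"
  by (simp add: scalar_prod_def atLeast0LessThan)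

lemma mult_unit_vec_eq_col:
  fixes A :: "'a :: semiring_1 mat"
  assumes "A \<in> carrier_mat r n" and "k < n"
  shows "A *\<^sub>v unit_vec n k = col A k"
  using assms by (intro eq_vecI) auto

lemma mat_eq_of_mult_vec_eq:
  fixes A B :: "'a :: semiring_1 mat"
  assumes "dim_row A = dim_row B" and "dim_col A = dim_col B"
    and "\<And>x. x \<in> carrier_vec (dim_col B) \<Longrightarrow> A *\<^sub>v x = B *\<^sub>v x"
  shows "A = B"
proof (rule mat_col_eqI)
  fix k assume k: "k < dim_col B"
  have A: "A \<in> carrier_mat (dim_row B) (dim_col B)" and B: "B \<in> carrier_mat (dim_row B) (dim_col B)"
    using assms(1,2) by (auto intro: carrier_matI)
  have "col A k = A *\<^sub>v unit_vec (dim_col B) k"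
    using mult_unit_vec_eq_col[OF A k] by simp
  also have "\<dots> = B *\<^sub>v unit_vec (dim_col B) k"
    using assms(3) by simp
  also have "\<dots> = col B k"
    using mult_unit_vec_eq_col[OF B k] .
  finally show "col A k = col B k" .
qed (use assms in auto)

lemma mult_mat_vec_assoc:
  assumes "dim_col A = dim_row B" and "dim_col B = dim_vec v"
  shows "(A * B) *\<^sub>v v = A *\<^sub>v (B *\<^sub>v v)"
proof (rule assoc_mult_mat_vec)
  show "A \<in> carrier_mat (dim_row A) (dim_col A)" "B \<in> carrier_mat (dim_col A) (dim_col B)"
    "v \<in> carrier_vec (dim_col B)"
    using assms by (auto intro: carrier_matI carrier_vecI)
qed

lemma dim_mat_adjoint [simp]:
  "dim_row (mat_adjoint X) = dim_col X" "dim_col (mat_adjoint X) = dim_row X"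
  by (auto simp: mat_adjoint_def)

lemma index_mat_adjoint [simp]:
  "i < dim_col X \<Longrightarrow> j < dim_row X \<Longrightarrow> mat_adjoint X $$ (i, j) = cnj (X $$ (j, i))"
  by (simp add: mat_adjoint_def mat_of_rows_def)

lemma mat_adjoint_carrier [simp]: "X \<in> carrier_mat r c \<Longrightarrow> mat_adjoint X \<in> carrier_mat c r"
  unfolding carrier_mat_def by simp

lemma mat_adjoint_mat_adjoint [simp]: "mat_adjoint (mat_adjoint (X :: complex mat)) = X"
  by (rule eq_matI) auto

lemma mat_adjoint_one [simp]: "mat_adjoint (1\<^sub>m n :: complex mat) = 1\<^sub>m n"
  by (rule eq_matI) auto

lemma mat_adjoint_mult:
  fixes A B :: "complex mat"
  assumes "dim_col A = dim_row B"
  shows "mat_adjoint (A * B) = mat_adjoint B * mat_adjoint A"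
  using assms
  by (intro eq_matI) (auto simp: index_mult_mat_sum cnj_sum mult.commute simp del: index_mult_mat(1))

lemma mat_adjoint_inner:
  fixes A :: "complex mat"
  assumes A: "A \<in> carrier_mat r c" and v: "v \<in> carrier_vec c" and w: "w \<in> carrier_vec r"
  shows "conjugate v \<bullet> (mat_adjoint A *\<^sub>v w) = conjugate (A *\<^sub>v v) \<bullet> w"
proof -
  have "conjugate v \<bullet> (mat_adjoint A *\<^sub>v w) = (\<Sum>i<c. \<Sum>k<r. cnj (A $$ (k, i)) * cnj (v $ i) * w $ k)"
    using assms by (simp add: scalar_prod_sum[of _ c] index_mult_mat_vec_sum sum_distrib_left
        mult.assoc mult.left_commute del: index_mult_mat_vec)
  also have "\<dots> = (\<Sum>k<r. \<Sum>i<c. cnj (A $$ (k, i)) * cnj (v $ i) * w $ k)"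
    by (rule sum.swap)
  also have "\<dots> = conjugate (A *\<^sub>v v) \<bullet> w"
    using assms by (simp add: scalar_prod_sum[of _ r] index_mult_mat_vec_sum sum_distrib_right cnj_sum
        del: index_mult_mat_vec)
  finally show ?thesis .
qed

lemma vnorm2_sq: "(vnorm2 v)\<^sup>2 = (\<Sum>i<dim_vec v. (cmod (v $ i))\<^sup>2)"
  unfolding vnorm2_def by (simp add: sum_nonneg)

lemma vnorm2_nonneg: "vnorm2 v \<ge> 0"
  unfolding vnorm2_def by (simp add: sum_nonneg)

lemma vnorm2_smult: "vnorm2 (a \<cdot>\<^sub>v v) = cmod a * vnorm2 v"
  unfolding vnorm2_def
  by (simp add: norm_mult power_mult_distrib flip: sum_distrib_left) (simp add: real_sqrt_mult)

lemma vnorm2_eq_0_iff: "vnorm2 v = 0 \<longleftrightarrow> v = 0\<^sub>v (dim_vec v)"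
  unfolding vnorm2_def by (auto simp: sum_nonneg_eq_0_iff vec_eq_iff)

lemma conjugate_scalar_prod_self: "conjugate v \<bullet> v = of_real ((vnorm2 v)\<^sup>2)"
  unfolding vnorm2_sq of_real_sum complex_norm_square
  by (simp add: scalar_prod_sum[of _ "dim_vec v"] mult.commute)

lemma conjugate_scalar_prod_sum:
  "v \<in> carrier_vec n \<Longrightarrow> w \<in> carrier_vec n \<Longrightarrow> conjugate v \<bullet> w = (\<Sum>i<n. cnj (v $ i) * w $ i)"
  by (simp add: scalar_prod_sum[of _ n])

section \<open>Unitary matrices and Householder reflections\<close>

definition unitary_mat :: "nat \<Rightarrow> complex mat \<Rightarrow> bool" where
  "unitary_mat n U \<longleftrightarrow> U \<in> carrier_mat n n \<and> mat_adjoint U * U = 1\<^sub>m n \<and> U * mat_adjoint U = 1\<^sub>m n"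

lemma unitary_mat_one: "unitary_mat n (1\<^sub>m n)"
  by (simp add: unitary_mat_def)

lemma unitary_mat_carrier: "unitary_mat n U \<Longrightarrow> U \<in> carrier_mat n n"
  by (simp add: unitary_mat_def)

lemma unitary_mat_cancel:
  assumes "unitary_mat n U" and "dim_vec y = n"
  shows "mat_adjoint U *\<^sub>v (U *\<^sub>v y) = y" and "U *\<^sub>v (mat_adjoint U *\<^sub>v y) = y"
proof -
  have "U \<in> carrier_mat n n" and "mat_adjoint U * U = 1\<^sub>m n" and "U * mat_adjoint U = 1\<^sub>m n"
    using assms(1) by (simp_all add: unitary_mat_def)
  then show "mat_adjoint U *\<^sub>v (U *\<^sub>v y) = y" and "U *\<^sub>v (mat_adjoint U *\<^sub>v y) = y"
    using assms(2) by (metis carrier_vecI mult_mat_vec_assoc one_mult_mat_vec carrier_matD dim_mat_adjoint)+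
qed

lemma unitary_mat_mult:
  assumes U: "unitary_mat n U" and V: "unitary_mat n V"
  shows "unitary_mat n (U * V)"
proof -
  have [simp]: "dim_row U = n" "dim_col U = n" "dim_row V = n" "dim_col V = n"
    using U V by (auto simp: unitary_mat_def)
  have "mat_adjoint (U * V) * (U * V) = 1\<^sub>m n" "(U * V) * mat_adjoint (U * V) = 1\<^sub>m n"
    by (auto intro!: mat_eq_of_mult_vec_eq
        simp: mat_adjoint_mult mult_mat_vec_assoc unitary_mat_cancel[OF U] unitary_mat_cancel[OF V])
  then show ?thesis by (simp add: unitary_mat_def carrier_matI)
qed

lemma mat_adjoint_conj_mult:
  fixes U V H :: "complex mat"
  assumes "U \<in> carrier_mat n n" and "V \<in> carrier_mat n n" and "H \<in> carrier_mat n n"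
  shows "mat_adjoint (U * V) * H * (U * V) = mat_adjoint V * (mat_adjoint U * H * U) * V"
  using assms
  by (auto intro!: mat_eq_of_mult_vec_eq simp: mat_adjoint_mult mult_mat_vec_assoc)

lemma hermitian_mat_adjoint_conj:
  fixes H U :: "complex mat"
  assumes "H \<in> carrier_mat n n" and "mat_adjoint H = H" and "U \<in> carrier_mat n n"
  shows "mat_adjoint (mat_adjoint U * H * U) = mat_adjoint U * H * U"
  using assms
  by (auto intro!: mat_eq_of_mult_vec_eq simp: mat_adjoint_mult mult_mat_vec_assoc)

lemma unitary_mat_vnorm2:
  assumes U: "unitary_mat n U" and v: "v \<in> carrier_vec n"
  shows "vnorm2 (U *\<^sub>v v) = vnorm2 v"
proof -
  have "conjugate (U *\<^sub>v v) \<bullet> (U *\<^sub>v v) = conjugate v \<bullet> (mat_adjoint U *\<^sub>v (U *\<^sub>v v))"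
    using mat_adjoint_inner[OF unitary_mat_carrier[OF U] v mult_mat_vec_carrier[OF unitary_mat_carrier[OF U] v]]
    by simp
  also have "\<dots> = conjugate v \<bullet> v"
    using U v by (simp add: unitary_mat_cancel)
  finally have "(vnorm2 (U *\<^sub>v v))\<^sup>2 = (vnorm2 v)\<^sup>2"
    by (metis conjugate_scalar_prod_self of_real_eq_iff)
  then show ?thesis
    using vnorm2_nonneg power2_eq_imp_eq by blast
qed

text \<open>For \<open>w = 0\<close> the factor \<open>2 / 0 = 0\<close> makes the reflection the identity.\<close>

definition householder_mat :: "nat \<Rightarrow> complex vec \<Rightarrow> complex mat" where
  "householder_mat n w =
     mat n n (\<lambda>(i, k). of_bool (i = k) - of_real (2 / (vnorm2 w)\<^sup>2) * w $ i * cnj (w $ k))"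

lemma householder_mat_carrier [simp]: "householder_mat n w \<in> carrier_mat n n"
  by (simp add: householder_mat_def)

lemma dim_householder_mat [simp]:
  "dim_row (householder_mat n w) = n" "dim_col (householder_mat n w) = n"
  by (simp_all add: householder_mat_def)

lemma householder_mat_mult_vec:
  assumes "w \<in> carrier_vec n" and "x \<in> carrier_vec n"
  shows "householder_mat n w *\<^sub>v x = x - (of_real (2 / (vnorm2 w)\<^sup>2) * (conjugate w \<bullet> x)) \<cdot>\<^sub>v w"
proof (rule eq_vecI)
  let ?c = "of_real (2 / (vnorm2 w)\<^sup>2) :: complex"
  fix i assume "i < dim_vec (x - (?c * (conjugate w \<bullet> x)) \<cdot>\<^sub>v w)"
  then have i: "i < n" using assms by simp
  have "(householder_mat n w *\<^sub>v x) $ i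
      = (\<Sum>k<n. of_bool (i = k) * x $ k - (?c * w $ i) * (cnj (w $ k) * x $ k))"
    using assms i by (simp add: householder_mat_def index_mult_mat_vec_sum algebra_simps
        del: index_mult_mat_vec)
  also have "\<dots> = x $ i - (?c * w $ i) * (conjugate w \<bullet> x)"
    using assms i by (simp add: sum_subtractf conjugate_scalar_prod_sum sum_distrib_left)
  finally show "(householder_mat n w *\<^sub>v x) $ i = (x - (?c * (conjugate w \<bullet> x)) \<cdot>\<^sub>v w) $ i"
    using assms i by simp
qed (use assms in \<open>simp add: householder_mat_def\<close>)

lemma householder_mat_hermitian: "mat_adjoint (householder_mat n w) = householder_mat n w"
  by (rule eq_matI) (auto simp: householder_mat_def)

lemma conjugate_scalar_prod_minus_smult:
  fixes v x w :: "complex vec"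
  assumes "v \<in> carrier_vec n" and "x \<in> carrier_vec n" and "w \<in> carrier_vec n"
  shows "conjugate v \<bullet> (x - a \<cdot>\<^sub>v w) = conjugate v \<bullet> x - a * (conjugate v \<bullet> w)"
  using assms
  by (simp add: conjugate_scalar_prod_sum algebra_simps sum_subtractf sum_distrib_left)

lemma vnorm2_unit_vec:
  assumes "j < n"
  shows "vnorm2 (unit_vec n j :: complex vec) = 1"
proof -
  have "(\<Sum>i<n. (cmod (unit_vec n j $ i :: complex))\<^sup>2) = (\<Sum>i<n. if i = j then 1 else 0)"
    by (intro sum.cong) (auto simp: unit_vec_def)
  then show ?thesis using assms by (simp add: vnorm2_def)
qed

lemma householder_mat_involutive:
  assumes w: "w \<in> carrier_vec n"
  shows "householder_mat n w * householder_mat n w = 1\<^sub>m n"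
proof (rule mat_eq_of_mult_vec_eq)
  let ?c = "of_real (2 / (vnorm2 w)\<^sup>2) :: complex" and ?Q = "householder_mat n w"
  fix x :: "complex vec" assume "x \<in> carrier_vec (dim_col (1\<^sub>m n :: complex mat))"
  then have x: "x \<in> carrier_vec n" by simp
  let ?s = "conjugate w \<bullet> x"
  have Qx: "?Q *\<^sub>v x = x - (?c * ?s) \<cdot>\<^sub>v w"
    using w x by (rule householder_mat_mult_vec)
  have "conjugate w \<bullet> (?Q *\<^sub>v x) = - ?s"
  proof (cases "vnorm2 w = 0")
    case True
    then have "w = 0\<^sub>v n" using w vnorm2_eq_0_iff by auto
    then show ?thesis
      using scalar_prod_left_zero[OF x] scalar_prod_left_zero[OF mult_mat_vec_carrier[OF householder_mat_carrier x]]
      by simp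
  next
    case False
    have "conjugate w \<bullet> (?Q *\<^sub>v x) = ?s - ?c * ?s * of_real ((vnorm2 w)\<^sup>2)"
      unfolding Qx using w x by (simp add: conjugate_scalar_prod_minus_smult conjugate_scalar_prod_self)
    also have "\<dots> = - ?s"
      using False by (simp add: field_simps)
    finally show ?thesis .
  qed
  then have "?Q *\<^sub>v (?Q *\<^sub>v x) = ?Q *\<^sub>v x - (?c * - ?s) \<cdot>\<^sub>v w"
    using householder_mat_mult_vec[OF w mult_mat_vec_carrier[OF householder_mat_carrier x]] by simp
  also have "\<dots> = x"
    unfolding Qx using w x by (intro eq_vecI) auto
  finally show "(?Q * ?Q) *\<^sub>v x = 1\<^sub>m n *\<^sub>v x"
    using x by (simp add: mult_mat_vec_assoc)
qed auto

lemma householder_mat_unitary: "w \<in> carrier_vec n \<Longrightarrow> unitary_mat n (householder_mat n w)"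
  by (simp add: unitary_mat_def householder_mat_hermitian householder_mat_involutive)

lemma householder_mat_fixes_orthogonal:
  assumes "w \<in> carrier_vec n" and "x \<in> carrier_vec n" and "conjugate w \<bullet> x = 0"
  shows "householder_mat n w *\<^sub>v x = x"
  using assms by (intro eq_vecI) (auto simp: householder_mat_mult_vec)

lemma householder_mat_reflects:
  assumes a: "a \<in> carrier_vec n" and b: "b \<in> carrier_vec n"
    and norm: "vnorm2 a = vnorm2 b" and real: "conjugate a \<bullet> b = conjugate b \<bullet> a"
  shows "householder_mat n (a - b) *\<^sub>v a = b"
proof -
  define w where "w = a - b"
  have w: "w \<in> carrier_vec n" using a b by (simp add: w_def)
  have conj_w: "conjugate w \<bullet> x = conjugate a \<bullet> x - conjugate b \<bullet> x" if "x \<in> carrier_vec n" for x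
    using a b that conjugate_scalar_prod_sum[OF w that]
    by (simp add: w_def conjugate_scalar_prod_sum sum_subtractf algebra_simps)
  have "conjugate a \<bullet> a = conjugate b \<bullet> b"
    using norm by (simp add: conjugate_scalar_prod_self)
  moreover have "conjugate w \<bullet> w = (conjugate a \<bullet> a - conjugate a \<bullet> b) - (conjugate b \<bullet> a - conjugate b \<bullet> b)"
    unfolding conj_w[OF w] unfolding w_def using a b
    by (simp add: scalar_prod_minus_distrib[of _ n])
  ultimately have ww: "of_real ((vnorm2 w)\<^sup>2) = 2 * (conjugate w \<bullet> a)"
    using a real by (simp add: conjugate_scalar_prod_self conj_w)
  show ?thesis
  proof (cases "vnorm2 w = 0")
    case True
    then have "w = 0\<^sub>v n" using w vnorm2_eq_0_iff by auto
    then have "a = b" using a b unfolding w_def by (auto simp: vec_eq_iff)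
    then show ?thesis using a b by (intro eq_vecI) (auto simp: householder_mat_mult_vec w_def)
  next
    case False
    have "conjugate w \<bullet> a = of_real ((vnorm2 w)\<^sup>2 / 2)"
      using ww by (simp add: field_simps)
    then have "of_real (2 / (vnorm2 w)\<^sup>2) * (conjugate w \<bullet> a) = of_real (2 / (vnorm2 w)\<^sup>2 * ((vnorm2 w)\<^sup>2 / 2))"
      by (simp only: of_real_mult)
    also have "\<dots> = 1"
      using False by simp
    finally have "of_real (2 / (vnorm2 w)\<^sup>2) * (conjugate w \<bullet> a) = 1" .
    then show ?thesis
      using a b w by (simp add: householder_mat_mult_vec flip: w_def) (auto simp: w_def)
  qed
qed

lemma conjugate_unit_vec_scalar_prod:
  fixes b :: "complex vec"
  assumes "j < n" and "b \<in> carrier_vec n"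
  shows "conjugate (unit_vec n j) \<bullet> b = b $ j"
proof -
  have "conjugate (unit_vec n j) \<bullet> b = (\<Sum>i<n. cnj (unit_vec n j $ i) * b $ i)"
    using assms by (simp add: conjugate_scalar_prod_sum[of _ n])
  also have "\<dots> = (\<Sum>i<n. if i = j then b $ j else 0)"
    by (intro sum.cong) (auto simp: unit_vec_def)
  finally show ?thesis using assms by simp
qed

lemma exists_reflection_onto:
  fixes u :: "complex vec"
  assumes u: "u \<in> carrier_vec n" and u1: "vnorm2 u = 1" and j: "j < n" and lead: "\<forall>i<j. u $ i = 0"
  shows "\<exists>V \<beta>. unitary_mat n V \<and> mat_adjoint V = V \<and> (\<forall>i<j. V *\<^sub>v unit_vec n i = unit_vec n i)
           \<and> V *\<^sub>v unit_vec n j = \<beta> \<cdot>\<^sub>v u"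
proof -
  define \<beta> :: complex where "\<beta> = (if u $ j = 0 then 1 else cnj (u $ j) / of_real (cmod (u $ j)))"
  have \<beta>_norm: "cmod \<beta> = 1"
    by (simp add: \<beta>_def norm_divide)
  have \<beta>u: "\<beta> * u $ j = of_real (cmod (u $ j))"
    by (simp add: \<beta>_def complex_norm_square[symmetric] power2_eq_square mult.commute)
  define b where "b = \<beta> \<cdot>\<^sub>v u"
  define e :: "complex vec" where "e = unit_vec n j"
  have b: "b \<in> carrier_vec n" and e: "e \<in> carrier_vec n"
    using u by (simp_all add: b_def e_def)
  define V where "V = householder_mat n (e - b)"
  have "V *\<^sub>v unit_vec n j = \<beta> \<cdot>\<^sub>v u"
    unfolding V_def e_def[symmetric] b_def[symmetric]
  proof (rule householder_mat_reflects[OF e b])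
    show "vnorm2 e = vnorm2 b"
      using j u1 \<beta>_norm by (simp add: e_def b_def vnorm2_unit_vec vnorm2_smult)
    show "conjugate e \<bullet> b = conjugate b \<bullet> e"
      using j u \<beta>u by (simp add: e_def b_def conjugate_unit_vec_scalar_prod scalar_prod_right_unit)
  qed
  moreover have "V *\<^sub>v unit_vec n i = unit_vec n i" if "i < j" for i
    unfolding V_def
  proof (rule householder_mat_fixes_orthogonal)
    show "conjugate (e - b) \<bullet> unit_vec n i = 0"
      using that j u lead by (simp add: e_def b_def scalar_prod_right_unit)
  qed (use e b that j in auto)
  moreover have "unitary_mat n V" and "mat_adjoint V = V"
    using e b by (simp_all add: V_def householder_mat_unitary householder_mat_hermitian)
  ultimately show ?thesis by blast
qed

section \<open>Unitary diagonalisation of Hermitian matrices\<close>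

lemma complex_mat_has_eigenvector:
  fixes A :: "complex mat"
  assumes A: "A \<in> carrier_mat n n" and n: "0 < n"
  shows "\<exists>\<mu> v. eigenvector A v \<mu>"
proof -
  have "degree (char_poly A) = n"
    using degree_monic_char_poly[OF A] by simp
  then have "\<not> constant (poly (char_poly A))"
    using n by (simp add: constant_degree)
  then obtain \<mu> where "poly (char_poly A) \<mu> = 0"
    using fundamental_theorem_of_algebra by blast
  then show ?thesis
    using eigenvalue_root_char_poly[OF A] unfolding eigenvalue_def by blast
qed

lemma sum_lessThan_drop_leading:
  fixes f :: "nat \<Rightarrow> 'a :: comm_monoid_add"
  assumes "\<And>k. k < j \<Longrightarrow> f k = 0" and "j \<le> n"
  shows "(\<Sum>k<n. f k) = (\<Sum>b<n - j. f (b + j))"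
proof -
  have "(\<Sum>k<n. f k) = (\<Sum>k\<in>{j..<n}. f k)"
    using assms by (intro sum.mono_neutral_right) auto
  also have "\<dots> = (\<Sum>k\<in>{0 + j..<(n - j) + j}. f k)"
    using assms(2) by simp
  also have "\<dots> = (\<Sum>b<n - j. f (b + j))"
    by (simp only: sum.shift_bounds_nat_ivl atLeast0LessThan)
  finally show ?thesis .
qed

lemma mult_vec_zero_padded:
  fixes T :: "'a :: comm_semiring_1 mat"
  assumes T: "T \<in> carrier_mat n n" and j: "j \<le> n" and y: "y \<in> carrier_vec (n - j)"
    and zero: "\<And>i k. i < j \<Longrightarrow> j \<le> k \<Longrightarrow> k < n \<Longrightarrow> T $$ (i, k) = 0"
  shows "T *\<^sub>v vec n (\<lambda>i. if i < j then 0 else y $ (i - j))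
       = vec n (\<lambda>i. if i < j then 0 else (mat (n - j) (n - j) (\<lambda>(a, b). T $$ (a + j, b + j)) *\<^sub>v y) $ (i - j))"
proof (rule eq_vecI)
  fix i assume "i < dim_vec (vec n (\<lambda>i. if i < j then 0
      else (mat (n - j) (n - j) (\<lambda>(a, b). T $$ (a + j, b + j)) *\<^sub>v y) $ (i - j)))"
  then have i: "i < n" by simp
  have "(T *\<^sub>v vec n (\<lambda>i. if i < j then 0 else y $ (i - j))) $ i = (\<Sum>b<n - j. T $$ (i, b + j) * y $ b)"
    using i T j by (simp add: index_mult_mat_vec_sum sum_lessThan_drop_leading[of j] del: index_mult_mat_vec)
  then show "(T *\<^sub>v vec n (\<lambda>i. if i < j then 0 else y $ (i - j))) $ i
      = vec n (\<lambda>i. if i < j then 0 else (mat (n - j) (n - j) (\<lambda>(a, b). T $$ (a + j, b + j)) *\<^sub>v y) $ (i - j)) $ i"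
    using i y zero by (simp add: index_mult_mat_vec_sum del: index_mult_mat_vec)
qed (use T in simp)

lemma eigenvector_vanishing_on_leading_coords:
  fixes T :: "complex mat"
  assumes T: "T \<in> carrier_mat n n" and j: "j < n"
    and zero: "\<And>i k. i < j \<Longrightarrow> j \<le> k \<Longrightarrow> k < n \<Longrightarrow> T $$ (i, k) = 0"
  shows "\<exists>\<mu> u. u \<in> carrier_vec n \<and> vnorm2 u = 1 \<and> (\<forall>i<j. u $ i = 0) \<and> T *\<^sub>v u = \<mu> \<cdot>\<^sub>v u"
proof -
  define T' where "T' = mat (n - j) (n - j) (\<lambda>(a, b). T $$ (a + j, b + j))"
  have T': "T' \<in> carrier_mat (n - j) (n - j)"
    by (simp add: T'_def)
  obtain \<mu> y where "eigenvector T' y \<mu>"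
    using complex_mat_has_eigenvector[OF T'] j by auto
  then have y: "y \<in> carrier_vec (n - j)" and y0: "y \<noteq> 0\<^sub>v (n - j)" and T'y: "T' *\<^sub>v y = \<mu> \<cdot>\<^sub>v y"
    unfolding eigenvector_def using T' by auto
  define z where "z = vec n (\<lambda>i. if i < j then 0 else y $ (i - j))"
  have z: "z \<in> carrier_vec n"
    by (simp add: z_def)
  have "T *\<^sub>v z = vec n (\<lambda>i. if i < j then 0 else (T' *\<^sub>v y) $ (i - j))"
    unfolding z_def T'_def by (rule mult_vec_zero_padded[OF T less_imp_le[OF j] y zero])
  also have "\<dots> = \<mu> \<cdot>\<^sub>v z"
    unfolding T'y z_def using y by (intro eq_vecI) auto
  finally have Tz: "T *\<^sub>v z = \<mu> \<cdot>\<^sub>v z" .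
  have "z \<noteq> 0\<^sub>v n"
  proof
    assume "z = 0\<^sub>v n"
    have "y $ b = 0" if "b < n - j" for b
    proof -
      have "y $ b = z $ (b + j)"
        using that by (simp add: z_def)
      then show ?thesis using \<open>z = 0\<^sub>v n\<close> that by simp
    qed
    then show False using y y0 by (auto simp: vec_eq_iff)
  qed
  then have zn: "vnorm2 z \<noteq> 0"
    using z vnorm2_eq_0_iff by auto
  define u where "u = of_real (1 / vnorm2 z) \<cdot>\<^sub>v z"
  have "u \<in> carrier_vec n" and "\<forall>i<j. u $ i = 0"
    using z j by (simp_all add: u_def z_def)
  moreover have "vnorm2 u = 1"
    using zn vnorm2_nonneg[of z] by (simp add: u_def vnorm2_smult norm_divide)
  moreover have "T *\<^sub>v u = \<mu> \<cdot>\<^sub>v u"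
    unfolding u_def mult_mat_vec[OF T z] Tz by (simp add: smult_smult_assoc mult.commute)
  ultimately show ?thesis by blast
qed

definition diagonal_upto :: "nat \<Rightarrow> 'a :: zero mat \<Rightarrow> bool" where
  "diagonal_upto j A \<longleftrightarrow> (\<forall>i<dim_row A. \<forall>k<j. i \<noteq> k \<longrightarrow> A $$ (i, k) = 0)"

lemma diagonal_upto_iff_unit_vec:
  fixes A :: "'a :: semiring_1 mat"
  assumes A: "A \<in> carrier_mat n n" and j: "j \<le> n"
  shows "diagonal_upto j A \<longleftrightarrow> (\<forall>k<j. \<exists>d. A *\<^sub>v unit_vec n k = d \<cdot>\<^sub>v unit_vec n k)"
proof
  assume diag: "diagonal_upto j A"
  show "\<forall>k<j. \<exists>d. A *\<^sub>v unit_vec n k = d \<cdot>\<^sub>v unit_vec n k"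
  proof (intro allI impI exI)
    fix k assume "k < j"
    then show "A *\<^sub>v unit_vec n k = A $$ (k, k) \<cdot>\<^sub>v unit_vec n k"
      unfolding mult_unit_vec_eq_col[OF A order.strict_trans2[OF \<open>k < j\<close> j]]
      using A j diag by (intro eq_vecI) (auto simp: diagonal_upto_def)
  qed
next
  assume cols: "\<forall>k<j. \<exists>d. A *\<^sub>v unit_vec n k = d \<cdot>\<^sub>v unit_vec n k"
  show "diagonal_upto j A"
    unfolding diagonal_upto_def
  proof (intro allI impI)
    fix i k assume i: "i < dim_row A" and k: "k < j" and ik: "i \<noteq> k"
    obtain d where "A *\<^sub>v unit_vec n k = d \<cdot>\<^sub>v unit_vec n k"
      using cols k by blast
    then have "col A k $ i = (d \<cdot>\<^sub>v unit_vec n k) $ i"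
      using mult_unit_vec_eq_col[OF A order.strict_trans2[OF k j]] by simp
    then show "A $$ (i, k) = 0"
      using A i k j ik by simp
  qed
qed

lemma hermitian_diagonal_upto_row_zero:
  fixes T :: "complex mat"
  assumes T: "T \<in> carrier_mat n n" and herm: "mat_adjoint T = T" and diag: "diagonal_upto j T"
    and "j \<le> n" and "i < j" and "k < n" and "i \<noteq> k"
  shows "T $$ (i, k) = 0"
proof -
  have "T $$ (i, k) = mat_adjoint T $$ (i, k)"
    by (simp only: herm)
  also have "\<dots> = cnj (T $$ (k, i))"
    using assms carrier_matD[OF T] by (intro index_mat_adjoint) simp_all
  finally show ?thesis
    using diag assms by (simp add: diagonal_upto_def)
qed

text \<open>A reflection that fixes the first \<open>j\<close> coordinate vectors and sends the next one to an
  eigenvector supported on the trailing coordinates diagonalises one more column.\<close>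

lemma hermitian_diagonal_upto_Suc:
  fixes T :: "complex mat"
  assumes T: "T \<in> carrier_mat n n" and herm: "mat_adjoint T = T" and j: "j < n"
    and diag: "diagonal_upto j T"
  shows "\<exists>V. unitary_mat n V \<and> diagonal_upto (Suc j) (mat_adjoint V * T * V)"
proof -
  have "T $$ (i, k) = 0" if "i < j" "j \<le> k" "k < n" for i k
    using hermitian_diagonal_upto_row_zero[OF T herm diag] j that by simp
  then obtain \<mu> u where u: "u \<in> carrier_vec n" "vnorm2 u = 1" "\<forall>i<j. u $ i = 0"
    and Tu: "T *\<^sub>v u = \<mu> \<cdot>\<^sub>v u"
    using eigenvector_vanishing_on_leading_coords[OF T j] by blast
  obtain V \<beta> where V: "unitary_mat n V" and hermV: "mat_adjoint V = V"
    and fix_lead: "\<forall>i<j. V *\<^sub>v unit_vec n i = unit_vec n i" and Vj: "V *\<^sub>v unit_vec n j = \<beta> \<cdot>\<^sub>v u"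
    using exists_reflection_onto[OF u(1,2) j u(3)] by blast
  have Vc: "V \<in> carrier_mat n n"
    using V by (rule unitary_mat_carrier)
  have T': "mat_adjoint V * T * V \<in> carrier_mat n n"
    using mult_carrier_mat[OF mult_carrier_mat[OF mat_adjoint_carrier[OF Vc] T] Vc] .
  have action: "(mat_adjoint V * T * V) *\<^sub>v unit_vec n k = V *\<^sub>v (T *\<^sub>v (V *\<^sub>v unit_vec n k))" for k
    using T Vc hermV by (simp add: mult_mat_vec_assoc)
  have "\<exists>d. (mat_adjoint V * T * V) *\<^sub>v unit_vec n k = d \<cdot>\<^sub>v unit_vec n k" if k: "k < Suc j" for k
  proof (cases "k < j")
    case True
    then obtain d where "T *\<^sub>v unit_vec n k = d \<cdot>\<^sub>v unit_vec n k"
      using diag diagonal_upto_iff_unit_vec[OF T] j by auto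
    then show ?thesis
      unfolding action using True fix_lead mult_mat_vec[OF Vc unit_vec_carrier] by auto
  next
    case False
    then have "k = j" using k by simp
    have "T *\<^sub>v (V *\<^sub>v unit_vec n j) = \<mu> \<cdot>\<^sub>v (V *\<^sub>v unit_vec n j)"
      unfolding Vj mult_mat_vec[OF T u(1)] Tu by (simp add: smult_smult_assoc mult.commute)
    then have "(mat_adjoint V * T * V) *\<^sub>v unit_vec n j = \<mu> \<cdot>\<^sub>v (V *\<^sub>v (V *\<^sub>v unit_vec n j))"
      unfolding action using mult_mat_vec[OF Vc, of "V *\<^sub>v unit_vec n j"] Vc by simp
    also have "\<dots> = \<mu> \<cdot>\<^sub>v unit_vec n j"
      using unitary_mat_cancel(1)[OF V, of "unit_vec n j"] hermV by simp
    finally show ?thesis using \<open>k = j\<close> by blast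
  qed
  then have "diagonal_upto (Suc j) (mat_adjoint V * T * V)"
    using diagonal_upto_iff_unit_vec[OF T', of "Suc j"] j by simp
  then show ?thesis using V by blast
qed

theorem hermitian_unitarily_diagonalizable:
  fixes H :: "complex mat"
  assumes H: "H \<in> carrier_mat n n" and herm: "mat_adjoint H = H"
  shows "\<exists>U. unitary_mat n U \<and> diagonal_mat (mat_adjoint U * H * U)"
proof -
  have "\<exists>U. unitary_mat n U \<and> diagonal_upto j (mat_adjoint U * H * U)" if "j \<le> n" for j
    using that
  proof (induction j)
    case 0
    show ?case using unitary_mat_one by (auto simp: diagonal_upto_def)
  next
    case (Suc j)
    then obtain U where U: "unitary_mat n U" and diag: "diagonal_upto j (mat_adjoint U * H * U)"
      by auto
    have Uc: "U \<in> carrier_mat n n"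
      using U by (rule unitary_mat_carrier)
    have "mat_adjoint U * H * U \<in> carrier_mat n n"
      using mult_carrier_mat[OF mult_carrier_mat[OF mat_adjoint_carrier[OF Uc] H] Uc] .
    moreover have "mat_adjoint (mat_adjoint U * H * U) = mat_adjoint U * H * U"
      using hermitian_mat_adjoint_conj[OF H herm Uc] .
    ultimately obtain V where V: "unitary_mat n V"
      and "diagonal_upto (Suc j) (mat_adjoint V * (mat_adjoint U * H * U) * V)"
      using hermitian_diagonal_upto_Suc diag Suc.prems by (metis Suc_le_lessD)
    then show ?case
      using unitary_mat_mult[OF U V] mat_adjoint_conj_mult[OF Uc unitary_mat_carrier[OF V] H] by auto
  qed
  then obtain U where "unitary_mat n U" and "diagonal_upto n (mat_adjoint U * H * U)"
    by blast
  then show ?thesis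
    using H by (auto simp: diagonal_upto_def diagonal_mat_def unitary_mat_def)
qed

section \<open>Counting small eigenvalues\<close>

lemma exists_nonzero_kernel_vec:
  fixes R :: "'a :: field mat"
  assumes R: "R \<in> carrier_mat r c" and rc: "r < c"
  shows "\<exists>v. v \<in> carrier_vec c \<and> v \<noteq> 0\<^sub>v c \<and> R *\<^sub>v v = 0\<^sub>v r"
proof -
  define rows where "rows i = (if i < r then row R i else 0\<^sub>v c)" for i
  define R' where "R' = mat\<^sub>r c c (\<lambda>i. if i = c - 1 then 0\<^sub>v c else rows i)"
  have R': "R' \<in> carrier_mat c c"
    by (simp add: R'_def)
  have "det R' = 0"
    unfolding R'_def using rc R by (intro det_row_0) (auto simp: rows_def)
  then obtain v where v: "v \<in> carrier_vec c" "v \<noteq> 0\<^sub>v c" and R'v: "R' *\<^sub>v v = 0\<^sub>v c"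
    using det_0_iff_vec_prod_zero_field[OF R'] by blast
  have "R *\<^sub>v v = 0\<^sub>v r"
  proof (rule eq_vecI)
    fix a assume "a < dim_vec (0\<^sub>v r :: 'a vec)"
    then have a: "a < r" by simp
    then have "(R' *\<^sub>v v) $ a = (R *\<^sub>v v) $ a"
      using rc R by (simp add: R'_def rows_def)
    then show "(R *\<^sub>v v) $ a = 0\<^sub>v r $ a"
      using R'v a rc by simp
  qed (use R in simp)
  then show ?thesis using v by blast
qed

lemma exists_nonzero_kernel_vec_vanishing_on:
  fixes R :: "'a :: field mat"
  assumes R: "R \<in> carrier_mat r n" and J: "J \<subseteq> {..<n}" and dim: "r + card J < n"
  shows "\<exists>y. y \<in> carrier_vec n \<and> y \<noteq> 0\<^sub>v n \<and> R *\<^sub>v y = 0\<^sub>v r \<and> (\<forall>i\<in>J. y $ i = 0)"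
proof -
  have fin: "finite J"
    using J finite_subset by blast
  define L where "L = sorted_list_of_set J"
  have set_L: "set L = J" and len_L: "length L = card J"
    using fin by (simp_all add: L_def)
  define R' where "R' = mat (r + card J) n (\<lambda>(a, b). if a < r then R $$ (a, b) else of_bool (b = L ! (a - r)))"
  obtain y where y: "y \<in> carrier_vec n" "y \<noteq> 0\<^sub>v n" and R'y: "R' *\<^sub>v y = 0\<^sub>v (r + card J)"
    using exists_nonzero_kernel_vec[of R' "r + card J" n] dim by (auto simp: R'_def)
  have R'_index: "R' $$ (a, b) = (if a < r then R $$ (a, b) else of_bool (b = L ! (a - r)))"
    if "a < r + card J" "b < n" for a b
    using that by (simp add: R'_def)
  have R'y_index: "(R' *\<^sub>v y) $ a = (\<Sum>b<n. R' $$ (a, b) * y $ b)" if "a < r + card J" for a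
    using that y by (simp add: index_mult_mat_vec_sum R'_def del: index_mult_mat_vec)
  have "R *\<^sub>v y = 0\<^sub>v r"
  proof (rule eq_vecI)
    fix a assume "a < dim_vec (0\<^sub>v r :: 'a vec)"
    then have a: "a < r" by simp
    have "(R' *\<^sub>v y) $ a = (\<Sum>b<n. R $$ (a, b) * y $ b)"
      using a by (simp add: R'y_index R'_index)
    also have "\<dots> = (R *\<^sub>v y) $ a"
      using a R y by (simp add: index_mult_mat_vec_sum del: index_mult_mat_vec)
    finally have "(R *\<^sub>v y) $ a = (R' *\<^sub>v y) $ a" ..
    then show "(R *\<^sub>v y) $ a = 0\<^sub>v r $ a"
      using R'y a by simp
  qed (use R in simp)
  moreover have "y $ i = 0" if "i \<in> J" for i
  proof -
    have "i \<in> set L"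
      using that set_L by simp
    then obtain p where p: "p < card J" and Lp: "L ! p = i"
      using len_L by (auto simp: in_set_conv_nth)
    have i: "i < n" using that J by auto
    have "(R' *\<^sub>v y) $ (r + p) = (\<Sum>b<n. of_bool (b = i) * y $ b)"
      using p Lp by (simp add: R'y_index R'_index)
    also have "\<dots> = (\<Sum>b<n. if b = i then y $ i else 0)"
      by (intro sum.cong) auto
    also have "\<dots> = y $ i"
      using i by simp
    finally show ?thesis using R'y p by simp
  qed
  ultimately show ?thesis using y by blast
qed

lemma diagonal_quadratic_form:
  fixes T :: "complex mat"
  assumes T: "T \<in> carrier_mat n n" and diag: "diagonal_mat T" and y: "y \<in> carrier_vec n"
  shows "conjugate y \<bullet> (T *\<^sub>v y) = (\<Sum>i<n. T $$ (i, i) * of_real ((cmod (y $ i))\<^sup>2))"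
proof -
  have Ty: "(T *\<^sub>v y) $ i = T $$ (i, i) * y $ i" if "i < n" for i
  proof -
    have "(T *\<^sub>v y) $ i = (\<Sum>k<n. T $$ (i, k) * y $ k)"
      using that T y by (simp add: index_mult_mat_vec_sum del: index_mult_mat_vec)
    also have "\<dots> = (\<Sum>k<n. if k = i then T $$ (i, i) * y $ i else 0)"
      using that T diag unfolding diagonal_mat_def by (intro sum.cong) auto
    finally show ?thesis using that by simp
  qed
  have "conjugate y \<bullet> (T *\<^sub>v y) = (\<Sum>i<n. cnj (y $ i) * (T *\<^sub>v y) $ i)"
    using conjugate_scalar_prod_sum[OF y mult_mat_vec_carrier[OF T y]] by simp
  also have "\<dots> = (\<Sum>i<n. T $$ (i, i) * of_real ((cmod (y $ i))\<^sup>2))"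
    by (intro sum.cong) (simp_all add: Ty complex_norm_square[unfolded of_real_power] mult_ac del: index_mult_mat_vec)
  finally show ?thesis .
qed

lemma exists_supported_vec_with_leading_image:
  fixes U :: "'a :: field mat"
  assumes U: "U \<in> carrier_mat n n" and I: "I \<subseteq> {..<n}" and big: "n - m < card I" and m: "m \<le> n"
  shows "\<exists>y. y \<in> carrier_vec n \<and> y \<noteq> 0\<^sub>v n \<and> (\<forall>i\<in>{..<n} - I. y $ i = 0)
           \<and> (\<forall>i. m \<le> i \<longrightarrow> i < n \<longrightarrow> (U *\<^sub>v y) $ i = 0)"
proof -
  define R where "R = mat (n - m) n (\<lambda>(a, b). U $$ (m + a, b))"
  have "(n - m) + card ({..<n} - I) < n"
    using big I card_mono[of "{..<n}" I] by (simp add: card_Diff_subset finite_subset)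
  then obtain y where y: "y \<in> carrier_vec n" "y \<noteq> 0\<^sub>v n" and Ry: "R *\<^sub>v y = 0\<^sub>v (n - m)"
    and y_out: "\<forall>i\<in>{..<n} - I. y $ i = 0"
    using exists_nonzero_kernel_vec_vanishing_on[of R "n - m" n "{..<n} - I"] by (auto simp: R_def)
  have "(U *\<^sub>v y) $ i = 0" if "m \<le> i" "i < n" for i
  proof -
    have "(R *\<^sub>v y) $ (i - m) = (U *\<^sub>v y) $ i"
      using that U y by (simp add: R_def index_mult_mat_vec_sum del: index_mult_mat_vec)
    then show ?thesis using Ry that by simp
  qed
  then show ?thesis using y y_out by blast
qed

text \<open>The min-max principle: on the coordinate subspace of dimension \<open>m\<close> the quadratic form
  is at most \<open>t\<close>, so that subspace meets the span of the eigenvectors with eigenvalue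
  \<open>> t\<close> only in \<open>0\<close>.\<close>

lemma card_large_diag_entries_le:
  fixes H U :: "complex mat" and t :: real
  assumes H: "H \<in> carrier_mat n n" and U: "unitary_mat n U"
    and diag: "diagonal_mat (mat_adjoint U * H * U)" and m: "m \<le> n"
    and small: "\<And>x. x \<in> carrier_vec n \<Longrightarrow> (\<forall>i. m \<le> i \<longrightarrow> i < n \<longrightarrow> x $ i = 0) \<Longrightarrow>
        Re (conjugate x \<bullet> (H *\<^sub>v x)) \<le> t * (vnorm2 x)\<^sup>2"
  shows "card {i. i < n \<and> t < Re ((mat_adjoint U * H * U) $$ (i, i))} \<le> n - m"
proof (rule ccontr)
  define T where "T = mat_adjoint U * H * U"
  define I where "I = {i. i < n \<and> t < Re (T $$ (i, i))}"
  have Uc: "U \<in> carrier_mat n n" and T: "T \<in> carrier_mat n n"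
    using U H by (auto simp: unitary_mat_def T_def)
  assume "\<not> ?thesis"
  then have big: "n - m < card I"
    by (simp add: I_def T_def)
  have "I \<subseteq> {..<n}"
    by (auto simp: I_def)
  then obtain y where y: "y \<in> carrier_vec n" "y \<noteq> 0\<^sub>v n" and y_out: "\<forall>i\<in>{..<n} - I. y $ i = 0"
    and lead: "\<forall>i. m \<le> i \<longrightarrow> i < n \<longrightarrow> (U *\<^sub>v y) $ i = 0"
    using exists_supported_vec_with_leading_image[OF Uc _ big m] by blast
  have "Re (conjugate (U *\<^sub>v y) \<bullet> (H *\<^sub>v (U *\<^sub>v y))) \<le> t * (vnorm2 y)\<^sup>2"
    using small[OF mult_mat_vec_carrier[OF Uc y(1)] lead] unitary_mat_vnorm2[OF U y(1)] by simp
  moreover have "conjugate (U *\<^sub>v y) \<bullet> (H *\<^sub>v (U *\<^sub>v y)) = conjugate y \<bullet> (T *\<^sub>v y)"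
    using mat_adjoint_inner[OF Uc y(1), of "H *\<^sub>v (U *\<^sub>v y)"] H Uc y
    by (simp add: T_def mult_mat_vec_assoc)
  ultimately have "(\<Sum>i<n. Re (T $$ (i, i)) * (cmod (y $ i))\<^sup>2) \<le> t * (\<Sum>i<n. (cmod (y $ i))\<^sup>2)"
    using diagonal_quadratic_form[OF T diag[folded T_def] y(1)] y by (simp add: vnorm2_sq)
  then have le: "(\<Sum>i<n. (Re (T $$ (i, i)) - t) * (cmod (y $ i))\<^sup>2) \<le> 0"
    by (simp add: left_diff_distrib sum_subtractf sum_distrib_left)
  have terms: "0 \<le> (Re (T $$ (i, i)) - t) * (cmod (y $ i))\<^sup>2" if "i < n" for i
    using that y_out by (cases "i \<in> I") (auto simp: I_def)
  obtain i0 where i0: "i0 < n" "y $ i0 \<noteq> 0"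
    using y by (auto simp: vec_eq_iff)
  then have "0 < (Re (T $$ (i0, i0)) - t) * (cmod (y $ i0))\<^sup>2"
    using y_out by (auto simp: I_def)
  also have "\<dots> \<le> (\<Sum>i<n. (Re (T $$ (i, i)) - t) * (cmod (y $ i))\<^sup>2)"
    using i0 terms by (intro member_le_sum) auto
  finally show False using le by simp
qed

lemma eigs_char_poly:
  assumes "X \<in> carrier_mat n n"
  shows "char_poly X = (\<Prod>a\<leftarrow>eigs X. [:- a, 1:])" and "length (eigs X) = n"
proof -
  have "\<exists>as. char_poly X = (\<Prod>a\<leftarrow>as. [:- a, 1:]) \<and> length as = dim_row X"
    using char_poly_factorized assms by auto
  then have "char_poly X = (\<Prod>a\<leftarrow>eigs X. [:- a, 1:]) \<and> length (eigs X) = dim_row X"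
    unfolding eigs_def by (rule someI_ex)
  then show "char_poly X = (\<Prod>a\<leftarrow>eigs X. [:- a, 1:])" and "length (eigs X) = n"
    using assms by auto
qed

lemma mset_eigs_unitary_upper_triangular:
  fixes H U :: "complex mat"
  assumes H: "H \<in> carrier_mat n n" and U: "unitary_mat n U"
    and ut: "upper_triangular (mat_adjoint U * H * U)"
  shows "mset (eigs H) = mset (diag_mat (mat_adjoint U * H * U))"
proof -
  define T where "T = mat_adjoint U * H * U"
  have Uc: "U \<in> carrier_mat n n" and T: "T \<in> carrier_mat n n"
    using U H by (auto simp: unitary_mat_def T_def)
  have "U * T * mat_adjoint U = H"
    using H Uc unfolding T_def
    by (intro mat_eq_of_mult_vec_eq) (auto simp: mult_mat_vec_assoc unitary_mat_cancel[OF U])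
  then have "similar_mat_wit H T U (mat_adjoint U)"
    using U T H by (auto simp: similar_mat_wit_def unitary_mat_def)
  then have "char_poly H = char_poly T"
    by (intro char_poly_similar) (auto simp: similar_mat_def)
  also have "\<dots> = (\<Prod>a\<leftarrow>diag_mat T. [:- a, 1:])"
    using T ut by (simp add: T_def char_poly_upper_triangular)
  finally show ?thesis
    using eigs_char_poly(1)[OF H] reconstruct_poly_monic_defines_mset by (metis T_def)
qed

lemma length_filter_mset_eq: "mset xs = mset ys \<Longrightarrow> length (filter P xs) = length (filter P ys)"
  by (metis mset_filter size_mset)

theorem hermitian_many_small_eigs:
  fixes H :: "complex mat" and t :: real
  assumes H: "H \<in> carrier_mat n n" and herm: "mat_adjoint H = H" and m: "m \<le> n"
    and small: "\<And>x. x \<in> carrier_vec n \<Longrightarrow> (\<forall>i. m \<le> i \<longrightarrow> i < n \<longrightarrow> x $ i = 0) \<Longrightarrow>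
        Re (conjugate x \<bullet> (H *\<^sub>v x)) \<le> t * (vnorm2 x)\<^sup>2"
  shows "m \<le> length (filter (\<lambda>a. Re a \<le> t) (eigs H))"
proof -
  obtain U where U: "unitary_mat n U" and diag: "diagonal_mat (mat_adjoint U * H * U)"
    using hermitian_unitarily_diagonalizable[OF H herm] by blast
  define T where "T = mat_adjoint U * H * U"
  have dim_T: "dim_row T = n"
    using unitary_mat_carrier[OF U] by (simp add: T_def)
  have "upper_triangular T"
    using diag by (auto simp: T_def diagonal_mat_def upper_triangular_def)
  then have "length (filter (\<lambda>a. Re a \<le> t) (eigs H)) = length (filter (\<lambda>a. Re a \<le> t) (diag_mat T))"
    using mset_eigs_unitary_upper_triangular[OF H U] by (intro length_filter_mset_eq) (simp add: T_def)
  also have "\<dots> = card ({..<n} - {i. i < n \<and> t < Re (T $$ (i, i))})"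
    unfolding length_filter_conv_card by (rule arg_cong[where f = card]) (auto simp: diag_mat_def dim_T)
  also have "\<dots> = n - card {i. i < n \<and> t < Re (T $$ (i, i))}"
    by (subst card_Diff_subset) auto
  finally show ?thesis
    using card_large_diag_entries_le[OF H U diag m small] m by (simp add: T_def)
qed

section \<open>Singular values and the spectral norm\<close>

lemma rev_sort_nth_le:
  fixes xs :: "real list"
  assumes many: "m \<le> length (filter (\<lambda>x. x \<le> c) xs)" and q: "length xs - m \<le> q" "q < length xs"
  shows "rev (sort xs) ! q \<le> c"
proof (rule ccontr)
  define s where "s = sort xs"
  define p where "p = length xs - Suc q"
  have len_s: "length s = length xs"
    by (simp add: s_def)
  assume "\<not> ?thesis"
  then have gt: "c < s ! p"
    using q by (simp add: rev_nth len_s s_def p_def)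
  have "{i. i < length s \<and> s ! i \<le> c} \<subseteq> {..<p}"
  proof
    fix i assume i: "i \<in> {i. i < length s \<and> s ! i \<le> c}"
    have "\<not> p \<le> i"
      using i gt sorted_nth_mono[of s p i] by (auto simp: s_def)
    then show "i \<in> {..<p}" by simp
  qed
  then have "card {i. i < length s \<and> s ! i \<le> c} \<le> p"
    using card_mono[OF finite_lessThan] by fastforce
  then have "length (filter (\<lambda>x. x \<le> c) s) \<le> p"
    by (simp only: length_filter_conv_card)
  moreover have "length (filter (\<lambda>x. x \<le> c) s) = length (filter (\<lambda>x. x \<le> c) xs)"
    by (rule length_filter_mset_eq) (simp add: s_def)
  ultimately show False
    using many q by (simp add: p_def)
qed

theorem sval_le_of_bounded_on_leading_coords:
  fixes S :: "complex mat" and c :: real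
  assumes S: "S \<in> carrier_mat n n" and c: "0 \<le> c" and m: "m \<le> n" and j: "n - m < j" "j \<le> n"
    and bound: "\<And>x. x \<in> carrier_vec n \<Longrightarrow> (\<forall>i. m \<le> i \<longrightarrow> i < n \<longrightarrow> x $ i = 0) \<Longrightarrow>
        vnorm2 (S *\<^sub>v x) \<le> c * vnorm2 x"
  shows "sval j S \<le> c"
proof -
  define H where "H = mat_adjoint S * S"
  have H: "H \<in> carrier_mat n n" and herm: "mat_adjoint H = H"
    using S by (auto simp: H_def mat_adjoint_mult)
  have "Re (conjugate x \<bullet> (H *\<^sub>v x)) \<le> c\<^sup>2 * (vnorm2 x)\<^sup>2"
    if x: "x \<in> carrier_vec n" and lead: "\<forall>i. m \<le> i \<longrightarrow> i < n \<longrightarrow> x $ i = 0" for x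
  proof -
    have "conjugate x \<bullet> (H *\<^sub>v x) = of_real ((vnorm2 (S *\<^sub>v x))\<^sup>2)"
      using mat_adjoint_inner[OF S x mult_mat_vec_carrier[OF S x]] S x
      by (simp add: H_def mult_mat_vec_assoc conjugate_scalar_prod_self)
    moreover have "(vnorm2 (S *\<^sub>v x))\<^sup>2 \<le> (c * vnorm2 x)\<^sup>2"
      using bound[OF x lead] vnorm2_nonneg by (intro power_mono) auto
    ultimately show ?thesis
      by (simp add: power_mult_distrib)
  qed
  then have many: "m \<le> length (filter (\<lambda>a. Re a \<le> c\<^sup>2) (eigs H))"
    using hermitian_many_small_eigs[OF H herm m] by blast
  define L where "L = map (\<lambda>a. sqrt (Re a)) (eigs H)"
  have "sqrt r \<le> c \<longleftrightarrow> r \<le> c\<^sup>2" for r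
    using c by (auto intro: sqrt_le_D real_le_lsqrt)
  then have "filter (\<lambda>x. x \<le> c) L = map (\<lambda>a. sqrt (Re a)) (filter (\<lambda>a. Re a \<le> c\<^sup>2) (eigs H))"
    unfolding L_def filter_map o_def by simp
  then have "m \<le> length (filter (\<lambda>x. x \<le> c) L)"
    using many by simp
  moreover have "length L = n"
    using eigs_char_poly(2)[OF H] by (simp add: L_def)
  moreover have "sval j S = rev (sort L) ! (j - 1)"
    by (simp add: sval_def sing_vals_def L_def H_def)
  ultimately show ?thesis
    using j by (simp add: rev_sort_nth_le)
qed

lemma cmod_index_le_vnorm2: "k < dim_vec v \<Longrightarrow> cmod (v $ k) \<le> vnorm2 v"
  unfolding vnorm2_def by (rule real_le_rsqrt) (rule member_le_sum, auto)

lemma mnorm2_bdd_above: "bdd_above {vnorm2 (M *\<^sub>v v) | v. v \<in> carrier_vec (dim_col M) \<and> vnorm2 v = 1}"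
proof (rule bdd_aboveI)
  fix r assume "r \<in> {vnorm2 (M *\<^sub>v v) | v. v \<in> carrier_vec (dim_col M) \<and> vnorm2 v = 1}"
  then obtain v where r: "r = vnorm2 (M *\<^sub>v v)" and v: "v \<in> carrier_vec (dim_col M)" and v1: "vnorm2 v = 1"
    by blast
  have row_bound: "cmod ((M *\<^sub>v v) $ i) \<le> (\<Sum>k<dim_col M. cmod (M $$ (i, k)))" if i: "i < dim_row M" for i
  proof -
    have "cmod ((M *\<^sub>v v) $ i) \<le> (\<Sum>k<dim_col M. cmod (M $$ (i, k)) * cmod (v $ k))"
      using i v by (simp add: index_mult_mat_vec_sum norm_mult flip: norm_mult del: index_mult_mat_vec)
        (rule norm_sum)
    also have "\<dots> \<le> (\<Sum>k<dim_col M. cmod (M $$ (i, k)))"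
      using v v1 cmod_index_le_vnorm2[of _ v] by (intro sum_mono mult_left_le) auto
    finally show ?thesis .
  qed
  show "r \<le> sqrt (\<Sum>i<dim_row M. (\<Sum>k<dim_col M. cmod (M $$ (i, k)))\<^sup>2)"
    unfolding r vnorm2_def using row_bound by (auto intro!: real_sqrt_le_mono sum_mono power_mono)
qed

lemma vnorm2_mult_vec_le_mnorm2:
  assumes v: "v \<in> carrier_vec (dim_col M)"
  shows "vnorm2 (M *\<^sub>v v) \<le> mnorm2 M * vnorm2 v"
proof (cases "vnorm2 v = 0")
  case True
  then have "M *\<^sub>v v = 0\<^sub>v (dim_row M)"
    using v vnorm2_eq_0_iff[of v] by (auto intro!: eq_vecI)
  then show ?thesis
    using True by (simp add: vnorm2_def)
next
  case False
  define u where "u = of_real (1 / vnorm2 v) \<cdot>\<^sub>v v"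
  have "vnorm2 (M *\<^sub>v u) \<le> mnorm2 M"
    unfolding mnorm2_def using v False vnorm2_nonneg[of v]
    by (intro cSup_upper[OF _ mnorm2_bdd_above]) (auto simp: u_def vnorm2_smult norm_divide)
  moreover have "vnorm2 (M *\<^sub>v u) = vnorm2 (M *\<^sub>v v) / vnorm2 v"
    using v vnorm2_nonneg[of v] by (simp add: u_def mult_mat_vec[OF carrier_matI] vnorm2_smult norm_divide)
  ultimately show ?thesis
    using False vnorm2_nonneg[of v] by (simp add: field_simps)
qed

lemma mnorm2_nonneg:
  assumes "0 < dim_col M"
  shows "0 \<le> mnorm2 M"
  using vnorm2_mult_vec_le_mnorm2[of "unit_vec (dim_col M) 0" M] vnorm2_unit_vec[OF assms]
    vnorm2_nonneg[of "M *\<^sub>v unit_vec (dim_col M) 0"] by simp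

section \<open>The block matrix \<open>S3\<close>\<close>

lemma vnorm2_leading_part:
  assumes "m \<le> dim_vec w" and "\<And>i. m \<le> i \<Longrightarrow> i < dim_vec w \<Longrightarrow> w $ i = 0"
  shows "vnorm2 w = vnorm2 (vec m (\<lambda>i. w $ i))"
  unfolding vnorm2_def using assms by (simp, intro arg_cong[where f = sqrt] sum.mono_neutral_right) auto

lemma index_block3_first_block_col:
  assumes "i < 3 * m" and "k < m"
  shows "block3 m X11 X12 X13 (0\<^sub>m m m) X22 X23 (0\<^sub>m m m) X32 X33 $$ (i, k)
           = (if i < m then X11 $$ (i, k) else 0)"
proof -
  have "i div m \<noteq> 0" if "\<not> i < m"
    using that assms by (simp add: div_eq_0_iff)
  moreover have "i mod m < m"
    using assms by simp
  ultimately show ?thesis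
    using assms by (auto simp: block3_def Let_def)
qed

lemma block3_mult_vec_first_block:
  fixes X11 :: "complex mat"
  assumes X11: "X11 \<in> carrier_mat m m" and x: "x \<in> carrier_vec (3 * m)"
    and lead: "\<forall>i. m \<le> i \<longrightarrow> i < 3 * m \<longrightarrow> x $ i = 0"
  shows "vnorm2 (block3 m X11 X12 X13 (0\<^sub>m m m) X22 X23 (0\<^sub>m m m) X32 X33 *\<^sub>v x)
           = vnorm2 (X11 *\<^sub>v vec m (\<lambda>i. x $ i))"
proof -
  let ?X = "block3 m X11 X12 X13 (0\<^sub>m m m) X22 X23 (0\<^sub>m m m) X32 X33"
  have entry: "(?X *\<^sub>v x) $ i = (if i < m then (X11 *\<^sub>v vec m (\<lambda>i. x $ i)) $ i else 0)"
    if i: "i < 3 * m" for i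
  proof -
    have "(?X *\<^sub>v x) $ i = (\<Sum>k<3 * m. ?X $$ (i, k) * x $ k)"
      using i x by (simp add: index_mult_mat_vec_sum block3_def del: index_mult_mat_vec)
    also have "\<dots> = (\<Sum>k<m. ?X $$ (i, k) * x $ k)"
      using lead by (intro sum.mono_neutral_right) auto
    also have "\<dots> = (if i < m then (X11 *\<^sub>v vec m (\<lambda>i. x $ i)) $ i else 0)"
      using i X11 by (simp add: index_block3_first_block_col index_mult_mat_vec_sum del: index_mult_mat_vec)
    finally show ?thesis .
  qed
  have "vec m (\<lambda>i. (?X *\<^sub>v x) $ i) = X11 *\<^sub>v vec m (\<lambda>i. x $ i)"
    using X11 entry by (intro eq_vecI) auto
  moreover have "vnorm2 (?X *\<^sub>v x) = vnorm2 (vec m (\<lambda>i. (?X *\<^sub>v x) $ i))"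
    using entry by (intro vnorm2_leading_part) (auto simp: block3_def)
  ultimately show ?thesis by simp
qed

lemma Mmat_carrier:
  assumes "B \<in> carrier_mat n m" and "C \<in> carrier_mat m n" and "D \<in> carrier_mat m m"
  shows "Mmat A B C D l \<in> carrier_mat m m"
  using assms by (intro carrier_matI) (auto simp: Mmat_def)

lemma S3_bounded_on_leading_coords:
  assumes "B \<in> carrier_mat n m" and "C \<in> carrier_mat m n" and "D \<in> carrier_mat m m"
    and x: "x \<in> carrier_vec (3 * m)" and lead: "\<forall>i. m \<le> i \<longrightarrow> i < 3 * m \<longrightarrow> x $ i = 0"
  shows "vnorm2 (S3 m A B C D l1 l2 l3 g12 g13 g23 *\<^sub>v x) \<le> mnorm2 (Mmat A B C D l1) * vnorm2 x"
proof -
  have M1: "Mmat A B C D l1 \<in> carrier_mat m m"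
    using assms(1-3) by (rule Mmat_carrier)
  have "vnorm2 (S3 m A B C D l1 l2 l3 g12 g13 g23 *\<^sub>v x) = vnorm2 (Mmat A B C D l1 *\<^sub>v vec m (\<lambda>i. x $ i))"
    unfolding S3_def by (rule block3_mult_vec_first_block[OF M1 x lead])
  also have "\<dots> \<le> mnorm2 (Mmat A B C D l1) * vnorm2 (vec m (\<lambda>i. x $ i))"
    using M1 by (intro vnorm2_mult_vec_le_mnorm2) auto
  also have "vnorm2 (vec m (\<lambda>i. x $ i)) = vnorm2 x"
    using x lead by (intro vnorm2_leading_part[symmetric]) auto
  finally show ?thesis .
qed

theorem mainTheorem4:
  fixes A B C D :: "complex mat" and n m :: nat
    and l1 l2 l3 g12 g13 g23 :: complex
  assumes "A \<in> carrier_mat n n" and "B \<in> carrier_mat n m"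
    and "C \<in> carrier_mat m n" and "D \<in> carrier_mat m m"
    and "m \<ge> 3"
    and "l1 \<noteq> l2" and "l1 \<noteq> l3" and "l2 \<noteq> l3"
    and "\<not> eigenvalue A l1" and "\<not> eigenvalue A l2" and "\<not> eigenvalue A l3"
  shows "sval (3 * m - 2) (S3 m A B C D l1 l2 l3 g12 g13 g23)
           \<le> Max {mnorm2 (Mmat A B C D l1), mnorm2 (Mmat A B C D l2), mnorm2 (Mmat A B C D l3)}"
proof -
  \<comment> \<open>Only the first block column \<open>[M_1; 0; 0]\<close> of \<open>S_3\<close> enters the bound.\<close>
  have M1: "Mmat A B C D l1 \<in> carrier_mat m m"
    using assms(2-4) by (rule Mmat_carrier)
  have "sval (3 * m - 2) (S3 m A B C D l1 l2 l3 g12 g13 g23) \<le> mnorm2 (Mmat A B C D l1)"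
  proof (rule sval_le_of_bounded_on_leading_coords[where m = m])
    show "S3 m A B C D l1 l2 l3 g12 g13 g23 \<in> carrier_mat (3 * m) (3 * m)"
      by (simp add: S3_def block3_def)
    show "0 \<le> mnorm2 (Mmat A B C D l1)"
      using M1 \<open>m \<ge> 3\<close> by (intro mnorm2_nonneg) simp
  qed (use \<open>m \<ge> 3\<close> S3_bounded_on_leading_coords[OF assms(2-4)] in auto)
  also have "\<dots> \<le> Max {mnorm2 (Mmat A B C D l1), mnorm2 (Mmat A B C D l2), mnorm2 (Mmat A B C D l3)}"
    by (rule Max_ge) simp_all
  finally show ?thesis .
qed

end
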